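(* Let $0\le\sigma<1$ and $f\colon[0,1]\to\mathbb R$ with $f_\sigma(x)=f(x)/x^\sigma$ integrable on $[0,1]$, and let $\bar f_\sigma=f_\sigma-\int_0^1f_\sigma(t)dt$. Let $(\varpi(n))_{n\ge1}$ be positive reals such that $\sum_{n\ge1}1/\varpi(n)$ converges, and put $\rho(d)=\sum_{n\ge d}1/\varpi(n)$. Assume $$\sum_{d\ge1}d^{1-2\sigma}\rho(d)\,|R_{\bar f_\sigma}(d)|<\infty.$$ Then $\sum_{n\ge1}\frac{|\Theta_{n,\sigma}(f)|}{\varpi(n)}<\infty$, where $\Theta_{n,\sigma}(f)=S_{n,\sigma}(f)-\big(\int_0^1f_\sigma(t)dt\big)\sum_{1\le\ell\le n}\ell^{1-2\sigma}$.
   Context: $S_{n,\sigma}(f)=\sum_{1\le k\le\ell\le n}\frac{1}{(k\ell)^\sigma}f\big(\frac k\ell\big)$. For a function $h$ on $(0,1]$, $R_h(d)=\frac1d\sum_{k=1}^d h(k/d)$. *)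

theory Defs
  imports "HOL-Analysis.Analysis"
begin

definition S_sum :: "nat \<Rightarrow> real \<Rightarrow> (real \<Rightarrow> real) \<Rightarrow> real" where
  "S_sum n \<sigma> f = (\<Sum>l\<in>{1..n}. \<Sum>k\<in>{1..l}.
      f (real k / real l) / (real k * real l) powr \<sigma>)"

definition R_avg :: "(real \<Rightarrow> real) \<Rightarrow> nat \<Rightarrow> real" where
  "R_avg h d = (1 / real d) * (\<Sum>k\<in>{1..d}. h (real k / real d))"

definition f_sig :: "real \<Rightarrow> (real \<Rightarrow> real) \<Rightarrow> real \<Rightarrow> real" where
  "f_sig \<sigma> f x = f x / x powr \<sigma>"

definition mean_sig :: "real \<Rightarrow> (real \<Rightarrow> real) \<Rightarrow> real" where
  "mean_sig \<sigma> f = (LINT t:{0..1}|lborel. f_sig \<sigma> f t)"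

definition fbar_sig :: "real \<Rightarrow> (real \<Rightarrow> real) \<Rightarrow> real \<Rightarrow> real" where
  "fbar_sig \<sigma> f x = f_sig \<sigma> f x - mean_sig \<sigma> f"

definition Theta :: "nat \<Rightarrow> real \<Rightarrow> (real \<Rightarrow> real) \<Rightarrow> real" where
  "Theta n \<sigma> f = S_sum n \<sigma> f - mean_sig \<sigma> f * (\<Sum>l\<in>{1..n}. real l powr (1 - 2 * \<sigma>))"

definition rho :: "(nat \<Rightarrow> real) \<Rightarrow> nat \<Rightarrow> real" where
  "rho w d = (\<Sum>i. 1 / w (i + d))"

end

theory Submission
  imports Defs
begin

text \<open>Since f(k/l)/(kl)^\<sigma> = f_\<sigma>(k/l)/l^(2\<sigma>), the inner sum of S(n,\<sigma>,f) over k
  equals l^(1-2\<sigma>) (R(l) + \<integral>f_\<sigma>) with R the average of the centred function, so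
  \<Theta>(n) is exactly the sum of d^(1-2\<sigma>) R(d) over d \<le> n. Bounding |\<Theta>(n)| by the partial
  sums of d^(1-2\<sigma>) |R(d)| and exchanging the order of summation dominates the partial sums
  of |\<Theta>(n)|/\<varpi>(n) by the sum of d^(1-2\<sigma>) |R(d)| \<rho>(d).\<close>

lemma sum_partial_sums_mult_swap:
  fixes a b :: "nat \<Rightarrow> 'a :: comm_semiring_1"
  shows "(\<Sum>n<N. (\<Sum>d\<le>n. a d) * b n) = (\<Sum>d<N. a d * (\<Sum>n\<in>{d..<N}. b n))"
proof (induction N)
  case 0
  then show ?case by simp
next
  case (Suc N)
  have "(\<Sum>d<Suc N. a d * (\<Sum>n\<in>{d..<Suc N}. b n))
      = (\<Sum>d<Suc N. a d * (\<Sum>n\<in>{d..<N}. b n) + a d * b N)"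
    by (intro sum.cong refl) (auto simp: sum.atLeastLessThan_Suc distrib_left)
  also have "\<dots> = (\<Sum>d<N. a d * (\<Sum>n\<in>{d..<N}. b n)) + (\<Sum>d\<le>N. a d) * b N"
    by (simp add: sum.distrib sum_distrib_right lessThan_Suc_atMost[symmetric] distrib_right)
  finally show ?case
    using Suc by simp
qed

lemma sum_atLeastLessThan_le_suminf_shift:
  fixes b :: "nat \<Rightarrow> real"
  assumes "summable b" and "\<And>n. 0 \<le> b n"
  shows "(\<Sum>n\<in>{d..<N}. b n) \<le> (\<Sum>i. b (i + d))"
proof -
  have "(\<Sum>n\<in>{d..<N}. b n) = (\<Sum>i<N - d. b (i + d))"
    by (rule sum.reindex_bij_witness[where j="\<lambda>n. n - d" and i="\<lambda>i. i + d"]) auto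
  also have "\<dots> \<le> (\<Sum>i. b (i + d))"
    using assms summable_iff_shift[of b d] by (intro sum_le_suminf) auto
  finally show ?thesis .
qed

lemma summable_abs_mult_of_partial_sum_bound:
  fixes a b c :: "nat \<Rightarrow> real"
  assumes a_nonneg: "\<And>d. 0 \<le> a d" and b_nonneg: "\<And>n. 0 \<le> b n" and "summable b"
    and c_le: "\<And>n. \<bar>c n\<bar> \<le> (\<Sum>d\<le>n. a d)"
    and summable_tails: "summable (\<lambda>d. a d * (\<Sum>i. b (i + d)))"
  shows "summable (\<lambda>n. \<bar>c n\<bar> * b n)"
proof -
  let ?B = "\<Sum>d. a d * (\<Sum>i. b (i + d))"
  have tail_le: "(\<Sum>n\<in>{d..<N}. b n) \<le> (\<Sum>i. b (i + d))" for d N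
    using \<open>summable b\<close> b_nonneg by (rule sum_atLeastLessThan_le_suminf_shift)
  have "(\<Sum>n<N. \<bar>c n\<bar> * b n) \<le> ?B" for N
  proof -
    have "(\<Sum>n<N. \<bar>c n\<bar> * b n) \<le> (\<Sum>n<N. (\<Sum>d\<le>n. a d) * b n)"
      by (intro sum_mono mult_right_mono c_le b_nonneg)
    also have "\<dots> = (\<Sum>d<N. a d * (\<Sum>n\<in>{d..<N}. b n))"
      by (rule sum_partial_sums_mult_swap)
    also have "\<dots> \<le> (\<Sum>d<N. a d * (\<Sum>i. b (i + d)))"
      by (intro sum_mono mult_left_mono tail_le a_nonneg)
    also have "\<dots> \<le> ?B"
      using summable_tails a_nonneg b_nonneg
      by (intro sum_le_suminf) (auto intro!: mult_nonneg_nonneg order_trans[OF sum_nonneg tail_le])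
    finally show ?thesis .
  qed
  then have "\<forall>n. (\<Sum>k\<le>n. \<bar>c k\<bar> * b k) \<le> ?B"
    by (metis lessThan_Suc_atMost)
  then show ?thesis
    using b_nonneg by (intro bounded_imp_summable[where B = ?B]) auto
qed

lemma S_sum_inner_eq_R_avg:
  assumes "l \<ge> 1"
  shows "(\<Sum>k\<in>{1..l}. f (real k / real l) / (real k * real l) powr \<sigma>)
    = real l powr (1 - 2 * \<sigma>) * (R_avg (fbar_sig \<sigma> f) l + mean_sig \<sigma> f)"
proof -
  have l_pos: "real l > 0"
    using assms by simp
  have term_eq: "f (real k / real l) / (real k * real l) powr \<sigma>
      = f_sig \<sigma> f (real k / real l) / real l powr (2 * \<sigma>)" if "k \<ge> 1" for k :: nat
    using that l_pos
    by (simp add: f_sig_def powr_mult powr_divide powr_add[symmetric] field_simps)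
  have "R_avg (fbar_sig \<sigma> f) l + mean_sig \<sigma> f
      = (\<Sum>k\<in>{1..l}. f_sig \<sigma> f (real k / real l)) / real l"
    using l_pos by (simp add: R_avg_def fbar_sig_def sum_subtractf field_simps)
  moreover have "real l powr (1 - 2 * \<sigma>) = real l / real l powr (2 * \<sigma>)"
    using l_pos by (simp add: powr_diff)
  ultimately show ?thesis
    using l_pos by (simp add: term_eq sum_divide_distrib[symmetric])
qed

lemma Theta_eq_sum_R_avg:
  "Theta n \<sigma> f = (\<Sum>l\<in>{1..n}. real l powr (1 - 2 * \<sigma>) * R_avg (fbar_sig \<sigma> f) l)"
proof -
  have "S_sum n \<sigma> f
      = (\<Sum>l\<in>{1..n}. real l powr (1 - 2 * \<sigma>) * (R_avg (fbar_sig \<sigma> f) l + mean_sig \<sigma> f))"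
    unfolding S_sum_def by (rule sum.cong[OF refl], rule S_sum_inner_eq_R_avg) simp
  then show ?thesis
    unfolding Theta_def by (simp add: sum_distrib_left sum_subtractf[symmetric] algebra_simps)
qed

lemma Theta_Suc_eq_sum_R_avg:
  "Theta (Suc n) \<sigma> f
    = (\<Sum>d\<le>n. real (Suc d) powr (1 - 2 * \<sigma>) * R_avg (fbar_sig \<sigma> f) (Suc d))"
  unfolding Theta_eq_sum_R_avg One_nat_def atMost_atLeast0 sum.atLeast_Suc_atMost_Suc_shift
  by (simp add: comp_def)

theorem proposition5p13:
  fixes \<sigma> :: real and f :: "real \<Rightarrow> real" and w :: "nat \<Rightarrow> real"
  assumes "0 \<le> \<sigma>" and "\<sigma> < 1"
    and "set_integrable lborel {0..1} (f_sig \<sigma> f)"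
    and "\<And>n. n \<ge> 1 \<Longrightarrow> w n > 0"
    and "summable (\<lambda>n. 1 / w (Suc n))"
    and "summable (\<lambda>d. real (Suc d) powr (1 - 2 * \<sigma>) * rho w (Suc d)
                          * \<bar>R_avg (fbar_sig \<sigma> f) (Suc d)\<bar>)"
  shows "summable (\<lambda>n. \<bar>Theta (Suc n) \<sigma> f\<bar> / w (Suc n))"
proof -
  define a where "a d = real (Suc d) powr (1 - 2 * \<sigma>) * \<bar>R_avg (fbar_sig \<sigma> f) (Suc d)\<bar>" for d
  define b where "b n = 1 / w (Suc n)" for n
  have Theta_le: "\<bar>Theta (Suc n) \<sigma> f\<bar> \<le> (\<Sum>d\<le>n. a d)" for n
    unfolding Theta_Suc_eq_sum_R_avg a_def
    by (rule order_trans[OF sum_abs]) (simp add: abs_mult)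
  have rho_eq: "rho w (Suc d) = (\<Sum>i. b (i + d))" for d
    by (simp add: rho_def b_def)
  have "summable (\<lambda>n. \<bar>Theta (Suc n) \<sigma> f\<bar> * b n)"
  proof (rule summable_abs_mult_of_partial_sum_bound[OF _ _ _ Theta_le])
    show "summable (\<lambda>d. a d * (\<Sum>i. b (i + d)))"
      using assms(6) by (simp add: a_def rho_eq[symmetric] mult_ac)
  qed (use assms(4,5) in \<open>auto simp: a_def b_def less_imp_le\<close>)
  then show ?thesis
    by (simp add: b_def)
qed

end
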